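(* Let $\mathbf{X}=\mathbf{D}_1\boldsymbol{\Gamma}_1$ with $\boldsymbol{\Gamma}_1\neq 0$, and $\mathbf{Y}=\mathbf{X}+\mathbf{E}$ with $\|\mathbf{E}\|_{2,\infty}^{p}\le\epsilon_0$. Let $|\Gamma_1^{\min}|$ and $|\Gamma_1^{\max}|$ be the smallest and largest absolute values of the nonzero entries of $\boldsymbol{\Gamma}_1$. Let $\hat{\boldsymbol{\Gamma}}_1=\mathcal{S}_{\beta_1}(\mathbf{D}_1^T\mathbf{Y})$. Assume (a) $\|\boldsymbol{\Gamma}_1\|_{0,\infty}^{s}<\tfrac12\Big(1+\tfrac{1}{\mu(\mathbf{D}_1)}\tfrac{|\Gamma_1^{\min}|}{|\Gamma_1^{\max}|}\Big)-\tfrac{1}{\mu(\mathbf{D}_1)}\tfrac{\epsilon_0}{|\Gamma_1^{\max}|}$; and (b) $|\Gamma_1^{\min}|-(\|\boldsymbol{\Gamma}_1\|_{0,\infty}^{s}-1)\mu(\mathbf{D}_1)|\Gamma_1^{\max}|-\epsilon_0>\beta_1>\|\boldsymbol{\Gamma}_1\|_{0,\infty}^{s}\mu(\mathbf{D}_1)|\Gamma_1^{\max}|+\epsilon_0$. Then (1) the support of $\hat{\boldsymbol{\Gamma}}_1$ equals that of $\boldsymbol{\Gamma}_1$; and (2) $\|\boldsymbol{\Gamma}_1-\hat{\boldsymbol{\Gamma}}_1\|_{2,\infty}^{p}\le\sqrt{\|\boldsymbol{\Gamma}_1\|_{0,\infty}^{p}}\,\big(\epsilon_0+\mu(\mathb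f{D}_1)(\|\boldsymbol{\Gamma}_1\|_{0,\infty}^{s}-1)|\Gamma_1^{\max}|+\beta_1\big)$.
   Context: Setting. Signals are one-dimensional of length $N$ with periodic boundary conditions; $m_0=1$, $\boldsymbol{\Gamma}_0=\mathbf{X}$. For $i\ge1$, $\boldsymbol{\Gamma}_i\in\mathbb{R}^{Nm_i}$ has entry $km_i+r$ equal to the coefficient of filter $r$ at spatial shift $k$. $\mathbf{D}_i\in\mathbb{R}^{Nm_{i-1}\times Nm_i}$ is a (stride) convolutional dictionary whose column $km_i+r$ is local filter $r$ (length $n_{i-1}m_{i-1}$) placed cyclically on entries $km_{i-1},\dots,km_{i-1}+n_{i-1}m_{i-1}-1$, zero elsewhere; $\mathbf{D}_1\in\mathbb{R}^{N\times Nm_1}$ consists of all cyclic shifts of $m_1$ filters of length $n_0$. Columns have unit $\ell_2$ norm; $\mu(\mathbf{D})=\max_{i\neq j}|\mathbf{d}_i^T\mathbf{d}_j|$. Stripes: $\mathbf{S}_{i,j}\boldsymbol{\Gamma}_i$ is the subvector of $\boldsymbol{\Gamma}_i$ at spatial shifts $k\in\{j-n_{i-1}+1,\dots,j+n_{i-1}-1\}$ (mod $N$), all channels; $\|\boldsymbol{\Gamma}_i\|_{0,\infty}^{s}=\max_j\|\mathbf{S}_{i,j}\boldsymbol{\Gamma}_i\|_0$. Patches: for $i\ge0$, $\mathbf{P}_{i,j}\mathbf{V}$ extracts from $\mathbf{V}\in\mathbb{R}^{Nm_i}$ the cyclically contiguous subvector at spatial shifts $j,\dots,j+n_i-1$,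 all channels (length $n_im_i$); $\|\mathbf{V}\|_{2,\infty}^{p}=\max_j\|\mathbf{P}_{i,j}\mathbf{V}\|_2$, $\|\mathbf{V}\|_{0,\infty}^{p}=\max_j\|\mathbf{P}_{i,j}\mathbf{V}\|_0$. Soft thresholding: $\mathcal{S}_\beta$ acts entrywise, $\mathcal{S}_\beta(z)=z+\beta$ if $z<-\beta$, $0$ if $|z|\le\beta$, $z-\beta$ if $z>\beta$. *)

theory Defs
  imports Complex_Main
begin

text \<open>Multichannel periodic signals of spatial length N with m channels are
functions V :: nat => real; entry k*m + r (k < N, r < m) is channel r at spatial shift k.\<close>

definition shift_dist :: "nat \<Rightarrow> nat \<Rightarrow> nat \<Rightarrow> nat" where
  "shift_dist N j k = (k + N - j) mod N"

definition patch_set :: "nat \<Rightarrow> nat \<Rightarrow> nat \<Rightarrow> nat \<Rightarrow> nat set" where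
  "patch_set N n m j = {c. c < N * m \<and> shift_dist N j (c div m) < n}"

text \<open>Stripe S_{i,j}: shifts j-n+1, ..., j+n-1 (mod N), all channels.\<close>
definition stripe_set :: "nat \<Rightarrow> nat \<Rightarrow> nat \<Rightarrow> nat \<Rightarrow> nat set" where
  "stripe_set N n m j = {c. c < N * m \<and>
      (shift_dist N j (c div m) < n \<or> N - shift_dist N j (c div m) < n)}"

definition norm_2inf_p :: "nat \<Rightarrow> nat \<Rightarrow> nat \<Rightarrow> (nat \<Rightarrow> real) \<Rightarrow> real" where
  "norm_2inf_p N n m V = Max ((\<lambda>j. sqrt (\<Sum>c\<in>patch_set N n m j. (V c)\<^sup>2)) ` {..<N})"

definition norm_0inf_p :: "nat \<Rightarrow> nat \<Rightarrow> nat \<Rightarrow> (nat \<Rightarrow> real) \<Rightarrow> nat" where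
  "norm_0inf_p N n m V = Max ((\<lambda>j. card {c \<in> patch_set N n m j. V c \<noteq> 0}) ` {..<N})"

definition norm_0inf_s :: "nat \<Rightarrow> nat \<Rightarrow> nat \<Rightarrow> (nat \<Rightarrow> real) \<Rightarrow> nat" where
  "norm_0inf_s N n m V = Max ((\<lambda>j. card {c \<in> stripe_set N n m j. V c \<noteq> 0}) ` {..<N})"

text \<open>Entry (i, c) of D_1 (N x N*m1): column c = k*m1 + r is filter r (length n0)
placed cyclically on entries k, ..., k+n0-1.\<close>
definition dict1 :: "nat \<Rightarrow> nat \<Rightarrow> nat \<Rightarrow> (nat \<Rightarrow> nat \<Rightarrow> real) \<Rightarrow> nat \<Rightarrow> nat \<Rightarrow> real" where
  "dict1 N n0 m1 f i c =
     (let k = c div m1; r = c mod m1; t = shift_dist N k i in if t < n0 then f r t else 0)"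

definition mat_vec :: "nat \<Rightarrow> nat \<Rightarrow> (nat \<Rightarrow> nat \<Rightarrow> real) \<Rightarrow> (nat \<Rightarrow> real) \<Rightarrow> nat \<Rightarrow> real" where
  "mat_vec rows cols D v = (\<lambda>i. if i < rows then (\<Sum>c<cols. D i c * v c) else 0)"

definition matT_vec :: "nat \<Rightarrow> nat \<Rightarrow> (nat \<Rightarrow> nat \<Rightarrow> real) \<Rightarrow> (nat \<Rightarrow> real) \<Rightarrow> nat \<Rightarrow> real" where
  "matT_vec rows cols D v = (\<lambda>c. if c < cols then (\<Sum>i<rows. D i c * v i) else 0)"

text \<open>Mutual coherence (0 added only to make the set nonempty; entries are nonnegative).\<close>
definition coherence :: "nat \<Rightarrow> nat \<Rightarrow> (nat \<Rightarrow> nat \<Rightarrow> real) \<Rightarrow> real" where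
  "coherence rows cols D = Max (insert 0
     {\<bar>\<Sum>i<rows. D i a * D i b\<bar> | a b. a < cols \<and> b < cols \<and> a \<noteq> b})"

definition soft_thr :: "real \<Rightarrow> real \<Rightarrow> real" where
  "soft_thr \<beta> z = (if z < - \<beta> then z + \<beta> else if z > \<beta> then z - \<beta> else 0)"

definition supp :: "nat \<Rightarrow> (nat \<Rightarrow> real) \<Rightarrow> nat set" where
  "supp L v = {c. c < L \<and> v c \<noteq> 0}"

definition abs_min_nz :: "nat \<Rightarrow> (nat \<Rightarrow> real) \<Rightarrow> real" where
  "abs_min_nz L v = Min ((\<lambda>c. \<bar>v c\<bar>) ` supp L v)"

definition abs_max_nz :: "nat \<Rightarrow> (nat \<Rightarrow> real) \<Rightarrow> real" where
  "abs_max_nz L v = Max ((\<lambda>c. \<bar>v c\<bar>) ` supp L v)"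

end

theory Submission
  imports Defs "HOL-Analysis.L2_Norm"
begin

text \<open>Since the columns of \<open>D\<^sub>1\<close> have unit norm, the correlation of column \<open>c\<close> with
  \<open>Y = D\<^sub>1\<Gamma> + E\<close> is \<open>\<Gamma> c\<close> plus an interference term and a noise term. Two columns whose
  supports are disjoint are orthogonal, so the interference only involves the nonzeros of
  \<open>\<Gamma>\<close> in the stripe around \<open>c\<close>; each contributes at most \<open>\<mu> |\<Gamma>\<^sub>max|\<close>. The noise term is a
  correlation of \<open>E\<close> with a unit vector supported on one patch, hence at most \<open>\<epsilon>\<^sub>0\<close> by
  Cauchy-Schwarz. Condition (b) places \<open>\<beta>\<^sub>1\<close> strictly between the largest correlation off the
  support and the smallest one on it, so soft thresholding keeps exactly the support of \<open>\<Gamma>\<close>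
  and moves each surviving entry by at most \<open>\<beta>\<^sub>1\<close>. Summing squares over a patch gives (2).\<close>

lemma shift_dist_eq:
  "a < N \<Longrightarrow> b < N \<Longrightarrow> shift_dist N a b = (if a \<le> b then b - a else b + N - a)"
  unfolding shift_dist_def by (auto simp: mod_if)

lemma shift_dist_window_overlap:
  assumes "ka < N" "kb < N" "i < N" "n \<le> N"
    and "shift_dist N ka i < n" "shift_dist N kb i < n"
  shows "shift_dist N ka kb < n \<or> N - shift_dist N ka kb < n"
  using assms by (simp add: shift_dist_eq split: if_splits; arith)

lemma finite_coherence_set:
  fixes L :: nat
  shows "finite {\<bar>\<Sum>i<N. D i a * D i b\<bar> | a b. a < L \<and> b < L \<and> a \<noteq> b}"
  by (rule finite_subset[of _ "(\<lambda>(a, b). \<bar>\<Sum>i<N. D i a * D i b\<bar>) ` ({..<L} \<times> {..<L})"]) auto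

lemma coherence_nonneg: "(0 :: real) \<le> coherence N L D"
  unfolding coherence_def by (rule Max_ge) (use finite_coherence_set in auto)

lemma abs_inner_le_coherence:
  "a < L \<Longrightarrow> b < L \<Longrightarrow> a \<noteq> b \<Longrightarrow> \<bar>\<Sum>i<N. D i a * D i b\<bar> \<le> coherence N L D"
  unfolding coherence_def by (rule Max_ge) (use finite_coherence_set in auto)

lemma abs_le_abs_max_nz: "c < L \<Longrightarrow> v c \<noteq> 0 \<Longrightarrow> \<bar>v c\<bar> \<le> abs_max_nz L v"
  unfolding abs_max_nz_def supp_def by (auto intro!: Max_ge)

lemma abs_min_nz_le_abs: "c < L \<Longrightarrow> v c \<noteq> 0 \<Longrightarrow> abs_min_nz L v \<le> \<bar>v c\<bar>"
  unfolding abs_min_nz_def supp_def by (auto intro!: Min_le)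

lemma soft_thr_eq_0: "\<bar>z\<bar> \<le> \<beta> \<Longrightarrow> soft_thr \<beta> z = 0"
  unfolding soft_thr_def by auto

lemma soft_thr_neq_0: "\<beta> < \<bar>z\<bar> \<Longrightarrow> 0 \<le> \<beta> \<Longrightarrow> soft_thr \<beta> z \<noteq> 0"
  unfolding soft_thr_def by auto

lemma abs_diff_soft_thr_le: "0 \<le> \<beta> \<Longrightarrow> \<bar>z - soft_thr \<beta> z\<bar> \<le> \<beta>"
  unfolding soft_thr_def by auto

lemma norm_2inf_p_nonneg:
  assumes "0 < N"
  shows "0 \<le> norm_2inf_p N n m V"
proof -
  have "0 \<le> sqrt (\<Sum>c\<in>patch_set N n m 0. (V c)\<^sup>2)" by (simp add: sum_nonneg)
  also have "\<dots> \<le> norm_2inf_p N n m V"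
    unfolding norm_2inf_p_def by (rule Max_ge) (use \<open>0 < N\<close> in auto)
  finally show ?thesis .
qed

lemma matT_vec_mat_vec_plus:
  assumes "c < L" and unit: "(\<Sum>i<N. (D i c)\<^sup>2) = 1"
  shows "matT_vec N L D (\<lambda>i. mat_vec N L D \<Gamma> i + E i) c
           = \<Gamma> c + (\<Sum>c'\<in>{..<L} - {c}. (\<Sum>i<N. D i c * D i c') * \<Gamma> c')
                  + (\<Sum>i<N. D i c * E i)"
proof -
  have "matT_vec N L D (\<lambda>i. mat_vec N L D \<Gamma> i + E i) c
          = (\<Sum>i<N. \<Sum>c'<L. D i c * D i c' * \<Gamma> c') + (\<Sum>i<N. D i c * E i)"
    using \<open>c < L\<close> unfolding matT_vec_def mat_vec_def
    by (simp add: distrib_left sum_distrib_left sum.distrib mult.assoc)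
  also have "(\<Sum>i<N. \<Sum>c'<L. D i c * D i c' * \<Gamma> c') = (\<Sum>c'<L. (\<Sum>i<N. D i c * D i c') * \<Gamma> c')"
    by (subst sum.swap) (simp add: sum_distrib_right)
  also have "\<dots> = (\<Sum>i<N. D i c * D i c) * \<Gamma> c
                   + (\<Sum>c'\<in>{..<L} - {c}. (\<Sum>i<N. D i c * D i c') * \<Gamma> c')"
    using \<open>c < L\<close> by (subst sum.remove[of _ c]) auto
  finally show ?thesis using unit by (simp add: power2_eq_square)
qed

lemma abs_dict1_noise_le:
  assumes "c < N * m1"
    and unit: "(\<Sum>i<N. (dict1 N n0 m1 f i c)\<^sup>2) = 1"
  shows "\<bar>\<Sum>i<N. dict1 N n0 m1 f i c * E i\<bar> \<le> norm_2inf_p N n0 1 E"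
proof -
  let ?d = "\<lambda>i. dict1 N n0 m1 f i c"
  define W where "W = patch_set N n0 1 (c div m1)"
  have W_sub: "W \<subseteq> {..<N}" unfolding W_def patch_set_def by auto
  have d_outside: "?d i = 0" if "i \<notin> W" "i < N" for i
    using that unfolding W_def patch_set_def dict1_def by (auto simp: Let_def)
  have "\<bar>\<Sum>i<N. ?d i * E i\<bar> = \<bar>\<Sum>i\<in>W. ?d i * E i\<bar>"
    by (subst sum.mono_neutral_left[OF _ W_sub]) (use d_outside in auto)
  also have "\<dots> \<le> (\<Sum>i\<in>W. \<bar>?d i\<bar> * \<bar>E i\<bar>)"
    by (rule order_trans[OF sum_abs]) (simp add: abs_mult)
  also have "\<dots> \<le> L2_set ?d W * L2_set E W" by (rule L2_set_mult_ineq)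
  also have "L2_set ?d W = 1"
    using unit sum.mono_neutral_left[OF _ W_sub, of "\<lambda>i. (?d i)\<^sup>2"] d_outside
    by (simp add: L2_set_def)
  also have "L2_set E W \<le> norm_2inf_p N n0 1 E"
    unfolding norm_2inf_p_def L2_set_def W_def
    by (rule Max_ge) (use less_mult_imp_div_less[OF \<open>c < N * m1\<close>] in auto)
  finally show ?thesis by simp
qed

lemma abs_dict1_interference_le:
  assumes "c < N * m1" "n0 \<le> N"
  shows "\<bar>\<Sum>c'\<in>{..<N * m1} - {c}. (\<Sum>i<N. dict1 N n0 m1 f i c * dict1 N n0 m1 f i c') * \<Gamma> c'\<bar>
     \<le> real (card ({c' \<in> stripe_set N n0 m1 (c div m1). \<Gamma> c' \<noteq> 0} - {c}))
        * coherence N (N * m1) (dict1 N n0 m1 f) * abs_max_nz (N * m1) \<Gamma>"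
proof -
  let ?D = "dict1 N n0 m1 f" and ?L = "N * m1"
  let ?\<mu> = "coherence N ?L ?D" and ?g = "abs_max_nz ?L \<Gamma>"
  define T where "T = {c' \<in> stripe_set N n0 m1 (c div m1). \<Gamma> c' \<noteq> 0} - {c}"
  have T_sub: "T \<subseteq> {..<?L} - {c}" unfolding T_def stripe_set_def by auto
  have orthogonal: "(\<Sum>i<N. ?D i c * ?D i c') = 0"
    if "c' < ?L" "c' \<notin> stripe_set N n0 m1 (c div m1)" for c'
  proof (rule ccontr)
    assume "(\<Sum>i<N. ?D i c * ?D i c') \<noteq> 0"
    then obtain i where i: "i < N" "?D i c * ?D i c' \<noteq> 0"
      by (meson sum.neutral lessThan_iff)
    then have "shift_dist N (c div m1) i < n0" "shift_dist N (c' div m1) i < n0"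
      unfolding dict1_def by (auto simp: Let_def split: if_splits)
    from shift_dist_window_overlap[OF less_mult_imp_div_less less_mult_imp_div_less i(1)
        \<open>n0 \<le> N\<close> this] assms(1) that
    show False unfolding stripe_set_def by auto
  qed
  have "(\<Sum>c'\<in>{..<?L} - {c}. (\<Sum>i<N. ?D i c * ?D i c') * \<Gamma> c')
          = (\<Sum>c'\<in>T. (\<Sum>i<N. ?D i c * ?D i c') * \<Gamma> c')"
    by (rule sum.mono_neutral_right) (use T_sub orthogonal in \<open>auto simp: T_def\<close>)
  moreover have "\<bar>\<Sum>c'\<in>T. (\<Sum>i<N. ?D i c * ?D i c') * \<Gamma> c'\<bar> \<le> (\<Sum>c'\<in>T. ?\<mu> * ?g)"
  proof (rule order_trans[OF sum_abs], rule sum_mono)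
    fix c' assume "c' \<in> T"
    then have "c' < ?L" "c' \<noteq> c" "\<Gamma> c' \<noteq> 0" using T_sub unfolding T_def by auto
    then show "\<bar>(\<Sum>i<N. ?D i c * ?D i c') * \<Gamma> c'\<bar> \<le> ?\<mu> * ?g"
      unfolding abs_mult
      by (intro mult_mono abs_inner_le_coherence abs_le_abs_max_nz)
        (use assms(1) coherence_nonneg in auto)
  qed
  ultimately show ?thesis unfolding T_def by simp
qed

lemma card_stripe_support_minus_le:
  assumes "c < N * m" "1 \<le> n"
  shows "real (card ({c' \<in> stripe_set N n m (c div m). \<Gamma> c' \<noteq> 0} - {c}))
           \<le> real (norm_0inf_s N n m \<Gamma>) - (if \<Gamma> c = 0 then 0 else 1)"
proof -
  define S where "S = {c' \<in> stripe_set N n m (c div m). \<Gamma> c' \<noteq> 0}"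
  have "finite S" by (rule finite_subset[of _ "{..<N * m}"]) (auto simp: S_def stripe_set_def)
  have card_le: "card S \<le> norm_0inf_s N n m \<Gamma>"
    unfolding norm_0inf_s_def S_def
    by (rule Max_ge) (use less_mult_imp_div_less[OF assms(1)] in auto)
  show ?thesis
  proof (cases "\<Gamma> c = 0")
    case True
    then show ?thesis
      using card_mono[OF \<open>finite S\<close>, of "S - {c}"] card_le unfolding S_def[symmetric] by simp
  next
    case False
    then have "c \<in> S"
      using assms less_mult_imp_div_less[OF assms(1)]
      unfolding S_def stripe_set_def shift_dist_def by simp
    then have "card S = Suc (card (S - {c}))" by (rule card.remove[OF \<open>finite S\<close>])
    then show ?thesis using card_le False unfolding S_def[symmetric] by simp
  qed
qed

lemma dict1_correlation_error:
  assumes "c < N * m1" "1 \<le> n0" "n0 \<le> N"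
    and unit: "(\<Sum>i<N. (dict1 N n0 m1 f i c)\<^sup>2) = 1"
    and nz: "c' < N * m1" "\<Gamma> c' \<noteq> 0"
  shows "\<bar>matT_vec N (N * m1) (dict1 N n0 m1 f)
            (\<lambda>i. mat_vec N (N * m1) (dict1 N n0 m1 f) \<Gamma> i + E i) c - \<Gamma> c\<bar>
         \<le> (real (norm_0inf_s N n0 m1 \<Gamma>) - (if \<Gamma> c = 0 then 0 else 1))
             * coherence N (N * m1) (dict1 N n0 m1 f) * abs_max_nz (N * m1) \<Gamma>
           + norm_2inf_p N n0 1 E"
proof -
  have "0 \<le> coherence N (N * m1) (dict1 N n0 m1 f) * abs_max_nz (N * m1) \<Gamma>"
    using coherence_nonneg abs_le_abs_max_nz[of c' "N * m1" \<Gamma>] nz by (meson abs_ge_zero order_trans zero_le_mult_iff)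
  then have "real (card ({c' \<in> stripe_set N n0 m1 (c div m1). \<Gamma> c' \<noteq> 0} - {c}))
               * coherence N (N * m1) (dict1 N n0 m1 f) * abs_max_nz (N * m1) \<Gamma>
             \<le> (real (norm_0inf_s N n0 m1 \<Gamma>) - (if \<Gamma> c = 0 then 0 else 1))
               * coherence N (N * m1) (dict1 N n0 m1 f) * abs_max_nz (N * m1) \<Gamma>"
    using card_stripe_support_minus_le[OF assms(1,2), of \<Gamma>]
    by (simp add: mult.assoc mult_right_mono)
  then show ?thesis
    using matT_vec_mat_vec_plus[where D = "dict1 N n0 m1 f", OF assms(1) unit, of \<Gamma> E]
      abs_dict1_interference_le[OF assms(1,3), of f \<Gamma>] abs_dict1_noise_le[OF assms(1) unit, of E]
    by linarith
qed

lemma norm_2inf_p_le_sqrt_norm_0inf_p: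
  assumes "0 < N" "0 \<le> B"
    and off_support: "\<And>c. c < N * m \<Longrightarrow> \<Gamma> c = 0 \<Longrightarrow> V c = 0"
    and on_support: "\<And>c. c < N * m \<Longrightarrow> \<Gamma> c \<noteq> 0 \<Longrightarrow> \<bar>V c\<bar> \<le> B"
  shows "norm_2inf_p N n m V \<le> sqrt (real (norm_0inf_p N n m \<Gamma>)) * B"
  unfolding norm_2inf_p_def
proof (rule Max.boundedI)
  show "(\<lambda>j. sqrt (\<Sum>c\<in>patch_set N n m j. (V c)\<^sup>2)) ` {..<N} \<noteq> {}"
    using \<open>0 < N\<close> by auto
next
  fix x assume "x \<in> (\<lambda>j. sqrt (\<Sum>c\<in>patch_set N n m j. (V c)\<^sup>2)) ` {..<N}"
  then obtain j where "j < N" and x: "x = sqrt (\<Sum>c\<in>patch_set N n m j. (V c)\<^sup>2)" by auto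
  define P where "P = patch_set N n m j"
  define Q where "Q = {c \<in> P. \<Gamma> c \<noteq> 0}"
  have "finite P" unfolding P_def patch_set_def by simp
  have P_bound: "c < N * m" if "c \<in> P" for c using that unfolding P_def patch_set_def by simp
  have "(\<Sum>c\<in>P. (V c)\<^sup>2) = (\<Sum>c\<in>Q. (V c)\<^sup>2)"
    by (rule sum.mono_neutral_right[OF \<open>finite P\<close>]) (use off_support P_bound in \<open>auto simp: Q_def\<close>)
  also have "\<dots> \<le> (\<Sum>c\<in>Q. B\<^sup>2)"
  proof (rule sum_mono)
    fix c assume "c \<in> Q"
    then have "\<bar>V c\<bar> \<le> B" using on_support P_bound unfolding Q_def by auto
    then show "(V c)\<^sup>2 \<le> B\<^sup>2" by (metis abs_ge_zero power2_abs power_mono)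
  qed
  finally have "x \<le> sqrt (real (card Q) * B\<^sup>2)" unfolding x P_def by simp
  also have "\<dots> = sqrt (real (card Q)) * B" using \<open>0 \<le> B\<close> by (simp add: real_sqrt_mult)
  finally have "x \<le> sqrt (real (card Q)) * B" .
  moreover have "card Q \<le> norm_0inf_p N n m \<Gamma>"
    unfolding norm_0inf_p_def Q_def P_def by (rule Max_ge) (use \<open>j < N\<close> in auto)
  then have "sqrt (real (card Q)) * B \<le> sqrt (real (norm_0inf_p N n m \<Gamma>)) * B"
    using \<open>0 \<le> B\<close> by (simp add: mult_right_mono)
  ultimately show "x \<le> sqrt (real (norm_0inf_p N n m \<Gamma>)) * B" by linarith
qed simp

theorem lemma2:
  fixes N n0 n1 m1 :: nat
    and f :: "nat \<Rightarrow> nat \<Rightarrow> real"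
    and \<Gamma> E Y \<Gamma>hat :: "nat \<Rightarrow> real"
    and \<epsilon>0 \<beta>1 \<mu> gmin gmax s :: real
  assumes "1 \<le> n0" and "n0 \<le> N" and "1 \<le> n1" and "n1 \<le> N" and "1 \<le> m1"
    and unit: "\<forall>c < N * m1. (\<Sum>i<N. (dict1 N n0 m1 f i c)\<^sup>2) = 1"
    and Y_def: "Y = (\<lambda>i. mat_vec N (N * m1) (dict1 N n0 m1 f) \<Gamma> i + E i)"
    and \<Gamma>hat_def: "\<Gamma>hat = (\<lambda>c. soft_thr \<beta>1 (matT_vec N (N * m1) (dict1 N n0 m1 f) Y c))"
    and \<mu>_def: "\<mu> = coherence N (N * m1) (dict1 N n0 m1 f)"
    and gmin_def: "gmin = abs_min_nz (N * m1) \<Gamma>"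
    and gmax_def: "gmax = abs_max_nz (N * m1) \<Gamma>"
    and s_def: "s = real (norm_0inf_s N n0 m1 \<Gamma>)"
    and nz: "\<exists>c < N * m1. \<Gamma> c \<noteq> 0"
    and noise: "norm_2inf_p N n0 1 E \<le> \<epsilon>0"
    and a: "s < 1/2 * (1 + 1/\<mu> * (gmin / gmax)) - 1/\<mu> * (\<epsilon>0 / gmax)"
    and b1: "gmin - (s - 1) * \<mu> * gmax - \<epsilon>0 > \<beta>1"
    and b2: "\<beta>1 > s * \<mu> * gmax + \<epsilon>0"
  shows "supp (N * m1) \<Gamma>hat = supp (N * m1) \<Gamma> \<and>
         norm_2inf_p N n1 m1 (\<lambda>c. \<Gamma> c - \<Gamma>hat c)
           \<le> sqrt (real (norm_0inf_p N n1 m1 \<Gamma>)) * (\<epsilon>0 + \<mu> * (s - 1) * gmax + \<beta>1)"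
proof -
  define z where "z = matT_vec N (N * m1) (dict1 N n0 m1 f) Y"
  obtain c0 where c0: "c0 < N * m1" "\<Gamma> c0 \<noteq> 0" using nz by auto
  have eps: "0 \<le> \<epsilon>0" using noise norm_2inf_p_nonneg[of N n0 1 E] c0 by fastforce
  have mu_gmax: "0 \<le> \<mu> * gmax"
    using coherence_nonneg abs_le_abs_max_nz[of c0 "N * m1" \<Gamma>] c0 unfolding \<mu>_def gmax_def
    by (meson abs_ge_zero order_trans zero_le_mult_iff)
  have "1 \<le> s"
    using card_stripe_support_minus_le[OF c0(1) \<open>1 \<le> n0\<close>, of \<Gamma>] c0 s_def by simp
  then have "0 \<le> (s - 1) * (\<mu> * gmax)" using mu_gmax by simp
  then have nonneg: "0 \<le> \<beta>1" "0 \<le> \<epsilon>0 + \<mu> * (s - 1) * gmax + \<beta>1"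
    using b2 eps mu_gmax by (simp_all add: algebra_simps)
  have err: "\<bar>z c - \<Gamma> c\<bar> \<le> (s - (if \<Gamma> c = 0 then 0 else 1)) * \<mu> * gmax + \<epsilon>0"
    if "c < N * m1" for c
    using dict1_correlation_error[where \<Gamma> = \<Gamma>, OF that \<open>1 \<le> n0\<close> \<open>n0 \<le> N\<close> unit[rule_format, OF that] c0, of E]
      noise
    unfolding z_def Y_def \<mu>_def gmax_def s_def by linarith
  have entry: "(\<Gamma>hat c \<noteq> 0 \<longleftrightarrow> \<Gamma> c \<noteq> 0) \<and>
      (\<Gamma> c \<noteq> 0 \<longrightarrow> \<bar>\<Gamma> c - \<Gamma>hat c\<bar> \<le> \<epsilon>0 + \<mu> * (s - 1) * gmax + \<beta>1)" if "c < N * m1" for c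
    using err[OF that] b1 b2 nonneg abs_min_nz_le_abs[OF that, of \<Gamma>]
      soft_thr_eq_0[of "z c" \<beta>1] soft_thr_neq_0[of \<beta>1 "z c"] abs_diff_soft_thr_le[of \<beta>1 "z c"]
    unfolding \<Gamma>hat_def z_def[symmetric] gmin_def[symmetric]
    by (cases "\<Gamma> c = 0") (auto simp: algebra_simps)
  have "norm_2inf_p N n1 m1 (\<lambda>c. \<Gamma> c - \<Gamma>hat c)
          \<le> sqrt (real (norm_0inf_p N n1 m1 \<Gamma>)) * (\<epsilon>0 + \<mu> * (s - 1) * gmax + \<beta>1)"
    by (rule norm_2inf_p_le_sqrt_norm_0inf_p) (use \<open>1 \<le> n0\<close> \<open>n0 \<le> N\<close> nonneg entry in auto)
  moreover have "supp (N * m1) \<Gamma>hat = supp (N * m1) \<Gamma>" unfolding supp_def using entry by auto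
  ultimately show ?thesis by simp
qed

end
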